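(* Let $\mathcal{A}^1_{+}$ (resp. $\mathcal{A}^1_{-}$) be the set of all $(a,b,c,d,e,f)\in\mathbb{R}^6$ such that the Ricci tensor of the Type $\mathcal{A}$ model $\mathcal{M}(a,b,c,d,e,f)$ has rank $1$ and is positive semi-definite (resp. negative semi-definite). Then each of $\mathcal{A}^1_{+}$ and $\mathcal{A}^1_{-}$ is a smooth submanifold of $\mathbb{R}^6$ diffeomorphic to $S^1\times S^1\times\mathbb{R}^3$.
   Context: For $(a,b,c,d,e,f)\in\mathbb{R}^6$, the Type $\mathcal{A}$ model $\mathcal{M}(a,b,c,d,e,f)$ is $(\mathbb{R}^2,\nabla)$ with torsion free connection whose constant Christoffel symbols ($\nabla_{\partial_{x^i}}\partial_{x^j}=\Gamma_{ij}{}^k\partial_{x^k}$) are $\Gamma_{11}{}^1=a$, $\Gamma_{11}{}^2=b$, $\Gamma_{12}{}^1=\Gamma_{21}{}^1=c$, $\Gamma_{12}{}^2=\Gamma_{21}{}^2=d$, $\Gamma_{22}{}^1=e$, $\Gamma_{22}{}^2=f$. Its Ricci tensor is the symmetric matrix $\rho=\begin{pmatrix}(a-d)d+b(f-c) & cd-be\\ cd-be & c(f-c)+(a-d)e\end{pmatrix}$. *)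

theory Defs
  imports "HOL-Analysis.Analysis"
begin

definition ricci :: "real \<Rightarrow> real \<Rightarrow> real \<Rightarrow> real \<Rightarrow> real \<Rightarrow> real \<Rightarrow> real^2^2" where
  "ricci a b c d e f = (\<chi> i j.
     if i = 1 \<and> j = 1 then (a - d) * d + b * (f - c)
     else if i = 2 \<and> j = 2 then c * (f - c) + (a - d) * e
     else c * d - b * e)"

definition psd :: "real^2^2 \<Rightarrow> bool" where
  "psd A \<longleftrightarrow> (\<forall>x. 0 \<le> x \<bullet> (A *v x))"

definition nsd :: "real^2^2 \<Rightarrow> bool" where
  "nsd A \<longleftrightarrow> (\<forall>x. x \<bullet> (A *v x) \<le> 0)"

type_synonym R6 = "real \<times> real \<times> real \<times> real \<times> real \<times> real"

definition A1plus :: "R6 set" where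
  "A1plus = {(a,b,c,d,e,f). rank (ricci a b c d e f) = 1 \<and> psd (ricci a b c d e f)}"

definition A1minus :: "R6 set" where
  "A1minus = {(a,b,c,d,e,f). rank (ricci a b c d e f) = 1 \<and> nsd (ricci a b c d e f)}"

fun Ck_on :: "nat \<Rightarrow> 'a::euclidean_space set \<Rightarrow> ('a \<Rightarrow> 'b::euclidean_space) \<Rightarrow> bool" where
  "Ck_on 0 U f = continuous_on U f"
| "Ck_on (Suc k) U f = ((\<forall>x\<in>U. f differentiable (at x)) \<and>
      (\<forall>v. Ck_on k U (\<lambda>x. frechet_derivative f (at x) v)))"

definition smooth_on :: "'a::euclidean_space set \<Rightarrow> ('a \<Rightarrow> 'b::euclidean_space) \<Rightarrow> bool" where
  "smooth_on U f \<longleftrightarrow> open U \<and> (\<forall>k. Ck_on k U f)"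

definition smooth_map_on :: "'a::euclidean_space set \<Rightarrow> ('a \<Rightarrow> 'b::euclidean_space) \<Rightarrow> bool" where
  "smooth_map_on S f \<longleftrightarrow> (\<forall>p\<in>S. \<exists>U F. open U \<and> p \<in> U \<and> smooth_on U F \<and> (\<forall>x\<in>S \<inter> U. F x = f x))"

definition diffeomorphic :: "'a::euclidean_space set \<Rightarrow> 'b::euclidean_space set \<Rightarrow> bool" where
  "diffeomorphic M N \<longleftrightarrow> (\<exists>f g. smooth_map_on M f \<and> smooth_map_on N g \<and>
      (\<forall>x\<in>M. f x \<in> N \<and> g (f x) = x) \<and> (\<forall>y\<in>N. g y \<in> M \<and> f (g y) = y))"

definition smooth_submanifold :: "'a::euclidean_space set \<Rightarrow> bool" where
  "smooth_submanifold M \<longleftrightarrow> (\<forall>p\<in>M. \<exists>U V (\<phi>::'a \<Rightarrow> 'a) \<psi> S.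
      open U \<and> p \<in> U \<and> open V \<and> subspace S \<and>
      smooth_on U \<phi> \<and> smooth_on V \<psi> \<and> \<phi> ` U = V \<and>
      (\<forall>x\<in>U. \<psi> (\<phi> x) = x) \<and> (\<forall>y\<in>V. \<phi> (\<psi> y) = y) \<and>
      \<phi> ` (M \<inter> U) = V \<inter> S)"

definition torus_times_R3 :: "(complex \<times> complex \<times> real \<times> real \<times> real) set" where
  "torus_times_R3 = sphere 0 1 \<times> sphere 0 1 \<times> UNIV"

end

theory Submission
  imports Defs
begin

text \<open>
  The Ricci tensor \<rho> is a symmetric 2 \<times> 2 matrix, so it has rank one and is positive
  (negative) semidefinite iff det \<rho> = 0 and tr \<rho> > 0 (tr \<rho> < 0); both cases are handled at
  once with a sign s, s\<twosuperior> = 1. In suitable coordinates (u, w, t, \<sigma>, \<kappa>, l) on the open set where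
  (u, w) = (a - d, f - c) \<noteq> 0 and t = tr \<rho> \<noteq> 0, which contains both sets, one has
  4 det \<rho> = t\<twosuperior> - \<sigma>\<twosuperior> - \<kappa>\<twosuperior>, so the sets become the half cones s t = \<surd>(\<sigma>\<twosuperior> + \<kappa>\<twosuperior>).
  Replacing t by s t - \<surd>(\<sigma>\<twosuperior> + \<kappa>\<twosuperior>) flattens the half cone into a hyperplane and yields a
  global slice chart. The slice is (\<real>\<twosuperior> - 0) \<times> (\<real>\<twosuperior> - 0) \<times> \<real>, which log-polar coordinates in
  the (u, w)- and (\<sigma>, \<kappa>)-planes identify with S\<onesuperior> \<times> S\<onesuperior> \<times> \<real>\<threesuperior>.
\<close>

section \<open>Smooth maps\<close>

lemma Ck_on_Suc_imp_Ck_on: "open U \<Longrightarrow> Ck_on (Suc k) U f \<Longrightarrow> Ck_on k U f"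
proof (induction k arbitrary: f)
  case 0
  then show ?case
    by (auto intro!: continuous_at_imp_continuous_on differentiable_imp_continuous_within)
qed simp

lemma Ck_on_Suc_has_derivative:
  "Ck_on (Suc k) U f \<Longrightarrow> x \<in> U \<Longrightarrow> (f has_derivative frechet_derivative f (at x)) (at x)"
  by (simp add: frechet_derivative_works)

lemma Ck_on_cong:
  "open U \<Longrightarrow> Ck_on k U f \<Longrightarrow> (\<And>x. x \<in> U \<Longrightarrow> f x = g x) \<Longrightarrow> Ck_on k U g"
proof (induction k arbitrary: f g)
  case 0
  then show ?case using continuous_on_cong by force
next
  case (Suc k)
  have g': "(g has_derivative frechet_derivative f (at x)) (at x)" if "x \<in> U" for x
    using Ck_on_Suc_has_derivative[OF Suc.prems(2) that] Suc.prems(1) that Suc.prems(3)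
    by (rule has_derivative_transform_within_open)
  have fd: "frechet_derivative g (at x) = frechet_derivative f (at x)" if "x \<in> U" for x
    by (rule frechet_derivative_at[OF g'[OF that], symmetric])
  have "Ck_on k U (\<lambda>x. frechet_derivative g (at x) v)" for v
    by (rule Suc.IH[OF Suc.prems(1), of "\<lambda>x. frechet_derivative f (at x) v"])
      (use Suc.prems(2) fd in simp_all)
  moreover have "\<forall>x\<in>U. g differentiable (at x)"
    using g' unfolding differentiable_def by blast
  ultimately show ?case by simp
qed

lemma Ck_on_SucI:
  assumes "open U" "\<And>x. x \<in> U \<Longrightarrow> (f has_derivative D x) (at x)"
    and "\<And>v. Ck_on k U (\<lambda>x. D x v)"
  shows "Ck_on (Suc k) U f"
proof -
  have fd: "frechet_derivative f (at x) = D x" if "x \<in> U" for x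
    by (rule frechet_derivative_at[OF assms(2)[OF that], symmetric])
  have "Ck_on k U (\<lambda>x. frechet_derivative f (at x) v)" for v
    by (rule Ck_on_cong[OF assms(1) assms(3)[of v]]) (simp add: fd)
  moreover have "\<forall>x\<in>U. f differentiable (at x)"
    using assms(2) unfolding differentiable_def by blast
  ultimately show ?thesis by simp
qed

lemma Ck_on_const: "open U \<Longrightarrow> Ck_on k U (\<lambda>x. c)"
proof (induction k arbitrary: c)
  case (Suc k)
  show ?case by (rule Ck_on_SucI[where D="\<lambda>x v. 0"]) (use Suc in auto)
qed simp

lemma Ck_on_id: "open U \<Longrightarrow> Ck_on k U (\<lambda>x. x)"
proof (induction k)
  case (Suc k)
  show ?case by (rule Ck_on_SucI[where D="\<lambda>x v. v"]) (use Suc Ck_on_const in auto)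
qed simp

lemma Ck_on_bounded_linear:
  "open U \<Longrightarrow> bounded_linear L \<Longrightarrow> Ck_on k U f \<Longrightarrow> Ck_on k U (\<lambda>x. L (f x))"
proof (induction k arbitrary: f)
  case 0
  then show ?case by (simp add: bounded_linear.continuous_on)
next
  case (Suc k)
  show ?case
    by (rule Ck_on_SucI[where D="\<lambda>x v. L (frechet_derivative f (at x) v)"])
       (use Suc in \<open>auto intro: bounded_linear.has_derivative simp: frechet_derivative_works[symmetric]\<close>)
qed

lemma Ck_on_add: "open U \<Longrightarrow> Ck_on k U f \<Longrightarrow> Ck_on k U g \<Longrightarrow> Ck_on k U (\<lambda>x. f x + g x)"
proof (induction k arbitrary: f g)
  case 0
  then show ?case by (simp add: continuous_on_add)
next
  case (Suc k)
  show ?case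
    by (rule Ck_on_SucI[where D="\<lambda>x v. frechet_derivative f (at x) v + frechet_derivative g (at x) v"])
       (use Suc in \<open>auto intro!: has_derivative_add simp: frechet_derivative_works[symmetric]\<close>)
qed

lemma Ck_on_sum:
  assumes "open U" "finite S" "\<And>i. i \<in> S \<Longrightarrow> Ck_on k U (f i)"
  shows "Ck_on k U (\<lambda>x. \<Sum>i\<in>S. f i x)"
  using assms(2,3) by (induction S rule: finite_induct) (auto intro: Ck_on_add Ck_on_const assms(1))

lemma Ck_on_bounded_bilinear:
  fixes prod :: "'b::euclidean_space \<Rightarrow> 'c::euclidean_space \<Rightarrow> 'd::euclidean_space"
    and f :: "'a::euclidean_space \<Rightarrow> 'b" and g :: "'a \<Rightarrow> 'c"
  assumes "bounded_bilinear prod" "open U"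
  shows "Ck_on k U f \<Longrightarrow> Ck_on k U g \<Longrightarrow> Ck_on k U (\<lambda>x. prod (f x) (g x))"
proof (induction k arbitrary: f g)
  case 0
  then show ?case by (simp add: bounded_bilinear.continuous_on[OF assms(1)])
next
  case (Suc k)
  let ?f' = "\<lambda>x. frechet_derivative f (at x)" and ?g' = "\<lambda>x. frechet_derivative g (at x)"
  have fk: "Ck_on k U f" and gk: "Ck_on k U g"
    using Suc.prems Ck_on_Suc_imp_Ck_on[OF assms(2)] by blast+
  show ?case
  proof (rule Ck_on_SucI[where D="\<lambda>x v. prod (f x) (?g' x v) + prod (?f' x v) (g x)"])
    show "((\<lambda>x. prod (f x) (g x)) has_derivative (\<lambda>v. prod (f x) (?g' x v) + prod (?f' x v) (g x))) (at x)"
      if "x \<in> U" for x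
      using bounded_bilinear.FDERIV[OF assms(1) Ck_on_Suc_has_derivative[OF Suc.prems(1) that]
          Ck_on_Suc_has_derivative[OF Suc.prems(2) that]] .
    show "Ck_on k U (\<lambda>x. prod (f x) (?g' x v) + prod (?f' x v) (g x))" for v
    proof (rule Ck_on_add[OF assms(2)])
      show "Ck_on k U (\<lambda>x. prod (f x) (?g' x v))"
        using Suc.prems(2) fk by (intro Suc.IH) auto
      show "Ck_on k U (\<lambda>x. prod (?f' x v) (g x))"
        using Suc.prems(1) gk by (intro Suc.IH) auto
    qed
  qed (fact assms)
qed

lemma Ck_on_compose:
  fixes f :: "'a::euclidean_space \<Rightarrow> 'b::euclidean_space" and g :: "'b \<Rightarrow> 'c::euclidean_space"
  assumes "open U" "open V"
  shows "f ` U \<subseteq> V \<Longrightarrow> Ck_on k U f \<Longrightarrow> Ck_on k V g \<Longrightarrow> Ck_on k U (\<lambda>x. g (f x))"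
proof (induction k arbitrary: f g)
  case 0
  then show ?case using continuous_on_compose2[of V g U f] by simp
next
  case (Suc k)
  let ?f' = "\<lambda>x. frechet_derivative f (at x)" and ?g' = "\<lambda>y. frechet_derivative g (at y)"
  have fk: "Ck_on k U f" using Suc.prems Ck_on_Suc_imp_Ck_on[OF assms(1)] by blast
  show ?case
  proof (rule Ck_on_SucI[where D="\<lambda>x v. ?g' (f x) (?f' x v)"])
    show "((\<lambda>x. g (f x)) has_derivative (\<lambda>v. ?g' (f x) (?f' x v))) (at x)" if "x \<in> U" for x
      using Suc.prems that
      by (intro has_derivative_compose[OF Ck_on_Suc_has_derivative Ck_on_Suc_has_derivative]) auto
    fix v
    \<comment> \<open>expanding \<open>?g' (f x)\<close> in a basis leaves only directional derivatives of \<open>g\<close>, which are \<open>C\<^sup>k\<close>\<close>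
    have "Ck_on k U (\<lambda>x. \<Sum>i\<in>Basis. (?f' x v \<bullet> i) *\<^sub>R ?g' (f x) i)"
    proof (rule Ck_on_sum[OF assms(1) finite_Basis])
      fix i :: 'b
      have "Ck_on k U (\<lambda>x. ?f' x v \<bullet> i)"
        using Suc.prems(2) by (intro Ck_on_bounded_linear[OF assms(1) bounded_linear_inner_left]) simp
      moreover have "Ck_on k U (\<lambda>x. ?g' (f x) i)"
        using Suc.prems(3) by (intro Suc.IH[OF Suc.prems(1) fk]) simp
      ultimately show "Ck_on k U (\<lambda>x. (?f' x v \<bullet> i) *\<^sub>R ?g' (f x) i)"
        by (rule Ck_on_bounded_bilinear[OF bounded_bilinear_scaleR assms(1)])
    qed
    moreover have "(\<Sum>i\<in>Basis. (?f' x v \<bullet> i) *\<^sub>R ?g' (f x) i) = ?g' (f x) (?f' x v)" if "x \<in> U" for x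
    proof -
      have lin: "linear (?g' (f x))"
        using Suc.prems that by (intro linear_frechet_derivative) auto
      have "?g' (f x) (?f' x v) = ?g' (f x) (\<Sum>i\<in>Basis. (?f' x v \<bullet> i) *\<^sub>R i)"
        by (simp only: euclidean_representation)
      then show ?thesis
        by (simp add: linear_sum[OF lin] linear_scale[OF lin])
    qed
    ultimately show "Ck_on k U (\<lambda>x. ?g' (f x) (?f' x v))"
      by (rule Ck_on_cong[OF assms(1)])
  qed (fact assms)
qed

lemma Ck_on_Suc_real_derivative:
  fixes g g' :: "real \<Rightarrow> real"
  assumes "open V" "\<And>y. y \<in> V \<Longrightarrow> (g has_real_derivative g' y) (at y)" "Ck_on k V g'"
  shows "Ck_on (Suc k) V g"
proof (rule Ck_on_SucI[where D="\<lambda>y h. g' y * h"])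
  show "(g has_derivative (\<lambda>h. g' y * h)) (at y)" if "y \<in> V" for y
    using assms(2)[OF that] by (simp add: has_field_derivative_def)
  show "Ck_on k V (\<lambda>y. g' y * h)" for h
    by (rule Ck_on_bounded_linear[OF assms(1) bounded_linear_mult_left assms(3)])
qed (fact assms)

lemma smooth_onI: "open U \<Longrightarrow> (\<And>k. Ck_on (Suc k) U f) \<Longrightarrow> smooth_on U f"
  unfolding smooth_on_def using Ck_on_Suc_imp_Ck_on by blast

lemma smooth_on_Ck_on: "smooth_on U f \<Longrightarrow> Ck_on k U f"
  by (simp add: smooth_on_def)

lemma smooth_on_open: "smooth_on U f \<Longrightarrow> open U"
  by (simp add: smooth_on_def)

lemma smooth_on_compose:
  "smooth_on V g \<Longrightarrow> smooth_on U f \<Longrightarrow> f ` U \<subseteq> V \<Longrightarrow> smooth_on U (\<lambda>x. g (f x))"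
  using Ck_on_compose[of U V f _ g] by (simp add: smooth_on_def)

lemma smooth_on_id: "open U \<Longrightarrow> smooth_on U (\<lambda>x. x)"
  by (simp add: smooth_on_def Ck_on_id)

lemma smooth_on_subset: "smooth_on U f \<Longrightarrow> open V \<Longrightarrow> V \<subseteq> U \<Longrightarrow> smooth_on V f"
  using smooth_on_compose[OF _ smooth_on_id] by blast

lemma smooth_on_cong: "smooth_on U f \<Longrightarrow> (\<And>x. x \<in> U \<Longrightarrow> f x = g x) \<Longrightarrow> smooth_on U g"
  unfolding smooth_on_def using Ck_on_cong by blast

lemma smooth_on_const: "open U \<Longrightarrow> smooth_on U (\<lambda>x. c)"
  by (simp add: smooth_on_def Ck_on_const)

lemma smooth_on_bounded_linear: "bounded_linear L \<Longrightarrow> smooth_on U f \<Longrightarrow> smooth_on U (\<lambda>x. L (f x))"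
  by (simp add: smooth_on_def Ck_on_bounded_linear)

lemma smooth_on_bounded_bilinear:
  fixes prod :: "'b::euclidean_space \<Rightarrow> 'c::euclidean_space \<Rightarrow> 'd::euclidean_space"
    and f :: "'a::euclidean_space \<Rightarrow> 'b" and g :: "'a \<Rightarrow> 'c"
  shows "bounded_bilinear prod \<Longrightarrow> smooth_on U f \<Longrightarrow> smooth_on U g \<Longrightarrow> smooth_on U (\<lambda>x. prod (f x) (g x))"
  by (simp add: smooth_on_def Ck_on_bounded_bilinear)

lemma smooth_on_add: "smooth_on U f \<Longrightarrow> smooth_on U g \<Longrightarrow> smooth_on U (\<lambda>x. f x + g x)"
  by (simp add: smooth_on_def Ck_on_add)

lemma smooth_on_minus: "smooth_on U f \<Longrightarrow> smooth_on U (\<lambda>x. - f x)"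
  by (rule smooth_on_bounded_linear[OF bounded_linear_minus[OF bounded_linear_ident]])

lemma smooth_on_diff: "smooth_on U f \<Longrightarrow> smooth_on U g \<Longrightarrow> smooth_on U (\<lambda>x. f x - g x)"
  using smooth_on_add[OF _ smooth_on_minus, of U f g] by simp

lemma smooth_on_mult:
  fixes f g :: "'a::euclidean_space \<Rightarrow> real"
  shows "smooth_on U f \<Longrightarrow> smooth_on U g \<Longrightarrow> smooth_on U (\<lambda>x. f x * g x)"
  by (rule smooth_on_bounded_bilinear[OF bounded_bilinear_mult])

lemma smooth_on_scaleR:
  "smooth_on U f \<Longrightarrow> smooth_on U g \<Longrightarrow> smooth_on U (\<lambda>x. f x *\<^sub>R g x)"
  by (rule smooth_on_bounded_bilinear[OF bounded_bilinear_scaleR])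

lemma smooth_on_power2:
  fixes f :: "'a::euclidean_space \<Rightarrow> real"
  shows "smooth_on U f \<Longrightarrow> smooth_on U (\<lambda>x. (f x)\<^sup>2)"
  unfolding power2_eq_square by (rule smooth_on_mult)

lemma smooth_on_fst: "smooth_on U f \<Longrightarrow> smooth_on U (\<lambda>x. fst (f x))"
  by (rule smooth_on_bounded_linear[OF bounded_linear_fst])

lemma smooth_on_snd: "smooth_on U f \<Longrightarrow> smooth_on U (\<lambda>x. snd (f x))"
  by (rule smooth_on_bounded_linear[OF bounded_linear_snd])

lemma smooth_on_Re: "smooth_on U f \<Longrightarrow> smooth_on U (\<lambda>x. Re (f x))"
  by (rule smooth_on_bounded_linear[OF bounded_linear_Re])

lemma smooth_on_Im: "smooth_on U f \<Longrightarrow> smooth_on U (\<lambda>x. Im (f x))"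
  by (rule smooth_on_bounded_linear[OF bounded_linear_Im])

lemma smooth_on_Pair:
  assumes "smooth_on U f" "smooth_on U g"
  shows "smooth_on U (\<lambda>x. (f x, g x))"
proof -
  have "smooth_on U (\<lambda>x. (f x, 0))"
    by (rule smooth_on_bounded_linear[OF bounded_linear_Pair[OF bounded_linear_ident bounded_linear_zero] assms(1)])
  moreover have "smooth_on U (\<lambda>x. (0, g x))"
    by (rule smooth_on_bounded_linear[OF bounded_linear_Pair[OF bounded_linear_zero bounded_linear_ident] assms(2)])
  ultimately have "smooth_on U (\<lambda>x. (f x, 0) + (0, g x))"
    by (rule smooth_on_add)
  then show ?thesis by simp
qed

lemma smooth_on_Complex:
  assumes "smooth_on U f" "smooth_on U g"
  shows "smooth_on U (\<lambda>x. Complex (f x) (g x))"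
proof -
  have "smooth_on U (\<lambda>x. f x *\<^sub>R 1 + g x *\<^sub>R \<i>)"
    using assms smooth_on_open by (intro smooth_on_add smooth_on_scaleR smooth_on_const) auto
  then show ?thesis by (rule smooth_on_cong) (simp add: complex_eq_iff)
qed

lemma smooth_on_exp_real: "smooth_on UNIV (exp :: real \<Rightarrow> real)"
proof -
  have "Ck_on k UNIV (exp :: real \<Rightarrow> real)" for k
  proof (induction k)
    case (Suc k)
    show ?case by (rule Ck_on_Suc_real_derivative[OF open_UNIV DERIV_exp Suc.IH])
  qed (simp add: continuous_on_exp continuous_on_id)
  then show ?thesis by (simp add: smooth_on_def)
qed

lemma smooth_on_inverse_real: "smooth_on (-{0}) (inverse :: real \<Rightarrow> real)"
proof -
  have "Ck_on k (-{0}) (inverse :: real \<Rightarrow> real)" for k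
  proof (induction k)
    case (Suc k)
    have "Ck_on k (-{0}) (\<lambda>y::real. inverse y * inverse y)"
      by (rule Ck_on_bounded_bilinear[OF bounded_bilinear_mult open_Compl[OF closed_singleton] Suc.IH Suc.IH])
    then have "Ck_on k (-{0}) (\<lambda>y::real. - (inverse y * inverse y))"
      by (rule Ck_on_bounded_linear[OF open_Compl[OF closed_singleton] bounded_linear_minus[OF bounded_linear_ident]])
    then have "Ck_on k (-{0}) (\<lambda>y::real. - (inverse y ^ 2))"
      by (simp add: power2_eq_square)
    then show ?case
      by (rule Ck_on_Suc_real_derivative[rotated 2]) (auto intro: DERIV_inverse[unfolded numeral_2_eq_2[symmetric]])
  qed (simp add: continuous_on_inverse continuous_on_id)
  then show ?thesis by (simp add: smooth_on_def open_Compl)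
qed

lemma smooth_on_ln_real: "smooth_on {0<..} (ln :: real \<Rightarrow> real)"
proof (rule smooth_onI)
  have "smooth_on {0<..} (inverse :: real \<Rightarrow> real)"
    by (rule smooth_on_subset[OF smooth_on_inverse_real]) auto
  then show "Ck_on (Suc k) {0<..} (ln :: real \<Rightarrow> real)" for k
    by (intro Ck_on_Suc_real_derivative smooth_on_Ck_on) (auto intro: DERIV_ln)
qed simp

lemma smooth_on_sqrt_real: "smooth_on {0<..} (sqrt :: real \<Rightarrow> real)"
proof -
  have "Ck_on k {0<..} sqrt" for k
  proof (induction k)
    case (Suc k)
    have "Ck_on k {0<..} (\<lambda>y. inverse (sqrt y))"
      by (rule Ck_on_compose[OF _ _ _ Suc.IH smooth_on_Ck_on[OF smooth_on_inverse_real]]) auto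
    then have "Ck_on k {0<..} (\<lambda>y. inverse (sqrt y) / 2)"
      by (rule Ck_on_bounded_linear[OF open_greaterThan bounded_linear_divide])
    then show ?case
      by (rule Ck_on_Suc_real_derivative[rotated 2]) (auto intro: DERIV_real_sqrt)
  qed (simp add: continuous_on_real_sqrt continuous_on_id)
  then show ?thesis by (simp add: smooth_on_def)
qed

lemma smooth_on_exp:
  fixes f :: "'a::euclidean_space \<Rightarrow> real"
  shows "smooth_on U f \<Longrightarrow> smooth_on U (\<lambda>x. exp (f x))"
  by (rule smooth_on_compose[OF smooth_on_exp_real]) auto

lemma smooth_on_inverse:
  fixes f :: "'a::euclidean_space \<Rightarrow> real"
  shows "smooth_on U f \<Longrightarrow> (\<And>x. x \<in> U \<Longrightarrow> f x \<noteq> 0) \<Longrightarrow> smooth_on U (\<lambda>x. inverse (f x))"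
  by (rule smooth_on_compose[OF smooth_on_inverse_real]) auto

lemma smooth_on_divide:
  fixes f g :: "'a::euclidean_space \<Rightarrow> real"
  shows "smooth_on U f \<Longrightarrow> smooth_on U g \<Longrightarrow> (\<And>x. x \<in> U \<Longrightarrow> g x \<noteq> 0) \<Longrightarrow> smooth_on U (\<lambda>x. f x / g x)"
  unfolding divide_inverse by (intro smooth_on_mult smooth_on_inverse)

lemma smooth_on_ln:
  fixes f :: "'a::euclidean_space \<Rightarrow> real"
  shows "smooth_on U f \<Longrightarrow> (\<And>x. x \<in> U \<Longrightarrow> 0 < f x) \<Longrightarrow> smooth_on U (\<lambda>x. ln (f x))"
  by (rule smooth_on_compose[OF smooth_on_ln_real]) auto

lemma smooth_on_sqrt:
  fixes f :: "'a::euclidean_space \<Rightarrow> real"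
  shows "smooth_on U f \<Longrightarrow> (\<And>x. x \<in> U \<Longrightarrow> 0 < f x) \<Longrightarrow> smooth_on U (\<lambda>x. sqrt (f x))"
  by (rule smooth_on_compose[OF smooth_on_sqrt_real]) auto

lemma smooth_submanifoldI:
  fixes \<phi> \<psi> :: "'a::euclidean_space \<Rightarrow> 'a"
  assumes "smooth_on U \<phi>" "smooth_on V \<psi>" "\<phi> ` U = V"
    and "\<And>x. x \<in> U \<Longrightarrow> \<psi> (\<phi> x) = x" "\<And>y. y \<in> V \<Longrightarrow> \<phi> (\<psi> y) = y"
    and "subspace S" "M \<subseteq> U" "\<phi> ` M = V \<inter> S"
  shows "smooth_submanifold M"
  unfolding smooth_submanifold_def
proof
  fix p assume "p \<in> M"
  have C: "open U \<and> p \<in> U \<and> open V \<and> subspace S \<and> smooth_on U \<phi> \<and> smooth_on V \<psi> \<and> \<phi> ` U = V \<and>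
      (\<forall>x\<in>U. \<psi> (\<phi> x) = x) \<and> (\<forall>y\<in>V. \<phi> (\<psi> y) = y) \<and> \<phi> ` (M \<inter> U) = V \<inter> S"
    using assms(1-6,8) smooth_on_open[OF assms(1)] smooth_on_open[OF assms(2)] Int_absorb2[OF assms(7)]
      subsetD[OF assms(7) \<open>p \<in> M\<close>]
    by (intro conjI ballI) simp_all
  show "\<exists>U V (\<phi>::'a \<Rightarrow> 'a) \<psi> S. open U \<and> p \<in> U \<and> open V \<and> subspace S \<and>
      smooth_on U \<phi> \<and> smooth_on V \<psi> \<and> \<phi> ` U = V \<and>
      (\<forall>x\<in>U. \<psi> (\<phi> x) = x) \<and> (\<forall>y\<in>V. \<phi> (\<psi> y) = y) \<and> \<phi> ` (M \<inter> U) = V \<inter> S"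
    using C by blast
qed

lemma diffeomorphicI:
  assumes "smooth_on U f" "smooth_on V g" "M \<subseteq> U" "N \<subseteq> V"
    and "\<And>x. x \<in> M \<Longrightarrow> f x \<in> N \<and> g (f x) = x" "\<And>y. y \<in> N \<Longrightarrow> g y \<in> M \<and> f (g y) = y"
  shows "diffeomorphic M N"
proof -
  have "smooth_map_on M f" "smooth_map_on N g"
    using assms(1-4) smooth_on_open[OF assms(1)] smooth_on_open[OF assms(2)]
    unfolding smooth_map_on_def by blast+
  then show ?thesis
    using assms(5,6) unfolding diffeomorphic_def by blast
qed

lemmas smooth_on_arith_intros = smooth_on_Pair smooth_on_add smooth_on_diff smooth_on_mult smooth_on_divide
  smooth_on_sqrt smooth_on_power2 smooth_on_fst smooth_on_snd smooth_on_id smooth_on_const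

section \<open>Symmetric 2 \<times> 2 matrices of rank one\<close>

lemma quadratic_form_2:
  fixes A :: "real^2^2"
  shows "x \<bullet> (A *v x) = A$1$1 * (x$1)\<^sup>2 + (A$1$2 + A$2$1) * (x$1 * x$2) + A$2$2 * (x$2)\<^sup>2"
  by (simp add: inner_vec_def matrix_vector_mult_def sum_2 algebra_simps power2_eq_square)

lemma matrix_2_eq_0_iff: "(A::real^2^2) = 0 \<longleftrightarrow> A$1$1 = 0 \<and> A$1$2 = 0 \<and> A$2$1 = 0 \<and> A$2$2 = 0"
  by (auto simp: vec_eq_iff forall_2)

lemma trace_2: "trace (A::real^2^2) = A$1$1 + A$2$2"
  by (simp add: trace_def sum_2)

lemma rank_eq_1_iff_2: "rank (A::real^2^2) = 1 \<longleftrightarrow> A \<noteq> 0 \<and> det A = 0"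
proof -
  have "rank A \<le> 2" using rank_bound[of A] by simp
  moreover have "det A = 0 \<longleftrightarrow> rank A < 2" using det_eq_0_rank[of A] by simp
  moreover have "rank A = 0 \<longleftrightarrow> A = 0" by (rule rank_eq_0)
  ultimately show ?thesis by linarith
qed

lemma psd_iff_diagonal_nonneg_2:
  fixes A :: "real^2^2"
  assumes sym: "A$1$2 = A$2$1" and singular: "det A = 0"
  shows "psd A \<longleftrightarrow> 0 \<le> A$1$1 \<and> 0 \<le> A$2$2"
proof
  assume "psd A"
  then have "0 \<le> axis 1 1 \<bullet> (A *v axis 1 1)" "0 \<le> axis 2 1 \<bullet> (A *v axis 2 1)"
    unfolding psd_def by blast+
  then show "0 \<le> A$1$1 \<and> 0 \<le> A$2$2"
    by (simp add: quadratic_form_2 axis_def)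
next
  assume nonneg: "0 \<le> A$1$1 \<and> 0 \<le> A$2$2"
  define p q r where "p = A$1$1" and "q = A$1$2" and "r = A$2$2"
  have pqr: "p * r = q\<^sup>2"
    using singular sym by (simp add: det_2 p_def q_def r_def power2_eq_square)
  show "psd A"
    unfolding psd_def
  proof
    fix x :: "real^2"
    define Q where "Q = p * (x$1)\<^sup>2 + 2 * q * (x$1 * x$2) + r * (x$2)\<^sup>2"
    have "x \<bullet> (A *v x) = Q"
      using sym by (simp add: quadratic_form_2 p_def q_def r_def Q_def)
    \<comment> \<open>completing the square, using \<open>p r = q\<^sup>2\<close>\<close>
    moreover have "0 \<le> Q"
    proof -
      have "p * Q = (p * x$1 + q * x$2)\<^sup>2" "r * Q = (q * x$1 + r * x$2)\<^sup>2"
        using pqr unfolding Q_def by algebra+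
      then have "0 \<le> p * Q" "0 \<le> r * Q"
        by simp_all
      moreover have "p = 0 \<Longrightarrow> r = 0 \<Longrightarrow> Q = 0"
        using pqr by (simp add: Q_def)
      ultimately show ?thesis
        using nonneg unfolding p_def[symmetric] r_def[symmetric] zero_le_mult_iff by force
    qed
    ultimately show "0 \<le> x \<bullet> (A *v x)"
      by simp
  qed
qed

lemma nsd_iff_psd_uminus: "nsd A \<longleftrightarrow> psd (- A)"
proof -
  have "x \<bullet> ((- A) *v x) = - (x \<bullet> (A *v x))" for x
    by (simp add: quadratic_form_2 algebra_simps)
  then show ?thesis by (simp add: nsd_def psd_def)
qed

lemma nonzero_nonneg_iff_pos_sum:
  fixes p q r :: real
  assumes "p * r = q\<^sup>2"
  shows "\<not> (p = 0 \<and> q = 0 \<and> r = 0) \<and> 0 \<le> p \<and> 0 \<le> r \<longleftrightarrow> 0 < p + r"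
proof
  assume "\<not> (p = 0 \<and> q = 0 \<and> r = 0) \<and> 0 \<le> p \<and> 0 \<le> r"
  moreover have "p = 0 \<Longrightarrow> r = 0 \<Longrightarrow> q = 0"
    using assms by simp
  ultimately show "0 < p + r"
    by linarith
next
  assume "0 < p + r"
  moreover have "0 \<le> p * r"
    using assms by simp
  ultimately show "\<not> (p = 0 \<and> q = 0 \<and> r = 0) \<and> 0 \<le> p \<and> 0 \<le> r"
    by (auto simp: zero_le_mult_iff)
qed

lemma rank_1_psd_iff_2:
  fixes A :: "real^2^2"
  assumes sym: "A$1$2 = A$2$1"
  shows "rank A = 1 \<and> psd A \<longleftrightarrow> det A = 0 \<and> 0 < trace A"
proof (cases "det A = 0")
  case True
  have "A$1$1 * A$2$2 = (A$1$2)\<^sup>2"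
    using True sym by (simp add: det_2 power2_eq_square)
  then have "A \<noteq> 0 \<and> 0 \<le> A$1$1 \<and> 0 \<le> A$2$2 \<longleftrightarrow> 0 < A$1$1 + A$2$2"
    using sym unfolding matrix_2_eq_0_iff by (metis nonzero_nonneg_iff_pos_sum)
  then show ?thesis
    using True unfolding rank_eq_1_iff_2 psd_iff_diagonal_nonneg_2[OF sym True] trace_2 by simp
qed (unfold rank_eq_1_iff_2, simp)

lemma rank_1_nsd_iff_2:
  fixes A :: "real^2^2"
  assumes sym: "A$1$2 = A$2$1"
  shows "rank A = 1 \<and> nsd A \<longleftrightarrow> det A = 0 \<and> trace A < 0"
proof -
  have "rank (- A) = 1 \<longleftrightarrow> rank A = 1" "det (- A) = det A" "trace (- A) = - trace A"
    unfolding rank_eq_1_iff_2 by (simp_all add: det_2 trace_2)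
  then show ?thesis
    using rank_1_psd_iff_2[of "- A"] sym by (simp add: nsd_iff_psd_uminus)
qed

section \<open>Coordinates adapted to the Ricci tensor\<close>

definition half_cone :: "real \<Rightarrow> R6 set" where
  "half_cone s = {(u, w, t, \<sigma>, \<kappa>, l). t\<^sup>2 = \<sigma>\<^sup>2 + \<kappa>\<^sup>2 \<and> 0 < s * t}"

text \<open>
  With z = (u, w) = (a - d, f - c), \<alpha> = (d + e, b + c) and \<beta> = (d - e, b - c), the coordinates are
  z, \<langle>\<alpha>, z\<rangle> = tr \<rho>, \<langle>\<beta>, z\<rangle> = \<rho>11 - \<rho>22, \<beta> \<times> \<alpha> = 2 \<rho>12 and z \<times> \<alpha>.
\<close>

definition ricci_coords :: "R6 \<Rightarrow> R6" where
  "ricci_coords = (\<lambda>(a, b, c, d, e, f). (a - d, f - c,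
      (d + e) * (a - d) + (b + c) * (f - c),
      (d - e) * (a - d) + (b - c) * (f - c),
      (b + c) * (d - e) - (d + e) * (b - c),
      (b + c) * (a - d) - (d + e) * (f - c)))"

lemma trace_ricci: "trace (ricci a b c d e f) = (d + e) * (a - d) + (b + c) * (f - c)"
  by (simp add: trace_2 ricci_def) algebra

lemma det_ricci:
  "4 * det (ricci a b c d e f) = ((d + e) * (a - d) + (b + c) * (f - c))\<^sup>2
     - ((d - e) * (a - d) + (b - c) * (f - c))\<^sup>2 - ((b + c) * (d - e) - (d + e) * (b - c))\<^sup>2"
  by (simp add: det_2 ricci_def) algebra

definition rank_one_locus :: "real \<Rightarrow> R6 set" where
  "rank_one_locus s = {(a, b, c, d, e, f). det (ricci a b c d e f) = 0 \<and> 0 < s * trace (ricci a b c d e f)}"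

lemma rank_one_locus_eq_vimage: "rank_one_locus s = ricci_coords -` half_cone s"
proof -
  have "x \<in> rank_one_locus s \<longleftrightarrow> ricci_coords x \<in> half_cone s" for x
  proof -
    obtain a b c d e f where x: "x = (a, b, c, d, e, f)" by (cases x) auto
    have "det (ricci a b c d e f) = 0 \<longleftrightarrow> ((d + e) * (a - d) + (b + c) * (f - c))\<^sup>2
        = ((d - e) * (a - d) + (b - c) * (f - c))\<^sup>2 + ((b + c) * (d - e) - (d + e) * (b - c))\<^sup>2"
      using det_ricci[of a b c d e f] by linarith
    then show ?thesis
      by (simp add: x rank_one_locus_def half_cone_def ricci_coords_def trace_ricci)
  qed
  then show ?thesis by blast
qed

lemma ricci_symmetric: "ricci a b c d e f $ 1 $ 2 = ricci a b c d e f $ 2 $ 1"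
  by (simp add: ricci_def)

lemma A1plus_eq_rank_one_locus: "A1plus = rank_one_locus 1"
  unfolding A1plus_def rank_one_locus_def rank_1_psd_iff_2[OF ricci_symmetric] by simp

lemma A1minus_eq_rank_one_locus: "A1minus = rank_one_locus (-1)"
  unfolding A1minus_def rank_one_locus_def rank_1_nsd_iff_2[OF ricci_symmetric] by simp

lemma plane_vector_from_dot_cross:
  fixes u w p q :: real
  assumes "u\<^sup>2 + w\<^sup>2 \<noteq> 0"
  shows "((p * u + q * w) * u - (q * u - p * w) * w) / (u\<^sup>2 + w\<^sup>2) = p"
    and "((p * u + q * w) * w + (q * u - p * w) * u) / (u\<^sup>2 + w\<^sup>2) = q"
proof -
  define r where "r = u\<^sup>2 + w\<^sup>2"
  have "(p * u + q * w) * u - (q * u - p * w) * w = p * r"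
    and "(p * u + q * w) * w + (q * u - p * w) * u = q * r"
    unfolding r_def by algebra+
  then show "((p * u + q * w) * u - (q * u - p * w) * w) / (u\<^sup>2 + w\<^sup>2) = p"
    and "((p * u + q * w) * w + (q * u - p * w) * u) / (u\<^sup>2 + w\<^sup>2) = q"
    using assms unfolding r_def[symmetric] by simp_all
qed

lemma dot_cross_of_plane_vector:
  fixes u w t l :: real
  assumes "u\<^sup>2 + w\<^sup>2 \<noteq> 0"
  shows "(t * u - l * w) / (u\<^sup>2 + w\<^sup>2) * u + (t * w + l * u) / (u\<^sup>2 + w\<^sup>2) * w = t"
    and "(t * w + l * u) / (u\<^sup>2 + w\<^sup>2) * u - (t * u - l * w) / (u\<^sup>2 + w\<^sup>2) * w = l"
proof -
  define r where "r = u\<^sup>2 + w\<^sup>2"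
  have r: "r \<noteq> 0"
    using assms by (simp add: r_def)
  have "(t * u - l * w) / r * u + (t * w + l * u) / r * w = ((t * u - l * w) * u + (t * w + l * u) * w) / r"
    using r by (simp add: field_simps)
  also have "\<dots> = t * r / r"
    unfolding r_def by algebra
  also have "\<dots> = t"
    using r by simp
  finally show "(t * u - l * w) / (u\<^sup>2 + w\<^sup>2) * u + (t * w + l * u) / (u\<^sup>2 + w\<^sup>2) * w = t"
    unfolding r_def .
  have "(t * w + l * u) / r * u - (t * u - l * w) / r * w = ((t * w + l * u) * u - (t * u - l * w) * w) / r"
    using r by (simp add: field_simps)
  also have "\<dots> = l * r / r"
    unfolding r_def by algebra
  also have "\<dots> = l"
    using r by simp
  finally show "(t * w + l * u) / (u\<^sup>2 + w\<^sup>2) * u - (t * u - l * w) / (u\<^sup>2 + w\<^sup>2) * w = l"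
    unfolding r_def .
qed

text \<open>
  The vectors (p, q) = \<alpha> and (p', q') = \<beta> are recovered from their scalar and cross products
  with z \<noteq> 0; the missing cross product m = z \<times> \<beta> is determined by t m = l \<sigma> - \<kappa> |z|\<twosuperior>.
\<close>

definition ricci_coords_inv :: "R6 \<Rightarrow> R6" where
  "ricci_coords_inv = (\<lambda>(u, w, t, \<sigma>, \<kappa>, l).
     let r = u\<^sup>2 + w\<^sup>2;
         p = (t * u - l * w) / r; q = (t * w + l * u) / r;
         m = (l * \<sigma> - \<kappa> * r) / t;
         p' = (\<sigma> * u - m * w) / r; q' = (\<sigma> * w + m * u) / r
     in (u + (p + p') / 2, (q + q') / 2, (q - q') / 2, (p + p') / 2, (p - p') / 2, w + (q - q') / 2))"

definition coords_domain :: "R6 set" where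
  "coords_domain = {(u, w, t, \<sigma>, \<kappa>, l). 0 < u\<^sup>2 + w\<^sup>2 \<and> t \<noteq> 0}"

lemma ricci_coords_inv_ricci_coords:
  assumes "ricci_coords x \<in> coords_domain"
  shows "ricci_coords_inv (ricci_coords x) = x"
proof -
  obtain u b c d e w where x: "x = (u + d, b, c, d, e, w + c)"
    by (metis add.commute diff_add_cancel prod_cases6)
  obtain t \<sigma> \<kappa> l where y: "ricci_coords x = (u, w, t, \<sigma>, \<kappa>, l)"
    and t_def: "t = (d + e) * u + (b + c) * w" and \<sigma>_def: "\<sigma> = (d - e) * u + (b - c) * w"
    and \<kappa>_def: "\<kappa> = (b + c) * (d - e) - (d + e) * (b - c)" and l_def: "l = (b + c) * u - (d + e) * w"
    by (simp add: x ricci_coords_def)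
  define r p q m p' q' where "r = u\<^sup>2 + w\<^sup>2" and "p = (t * u - l * w) / r" and "q = (t * w + l * u) / r"
    and "m = (l * \<sigma> - \<kappa> * r) / t" and "p' = (\<sigma> * u - m * w) / r" and "q' = (\<sigma> * w + m * u) / r"
  have "0 < r" and t: "t \<noteq> 0"
    using assms by (simp_all add: y coords_domain_def r_def)
  then have r: "u\<^sup>2 + w\<^sup>2 \<noteq> 0"
    unfolding r_def by linarith
  have pq: "p = d + e" "q = b + c"
    using plane_vector_from_dot_cross[OF r, of "d + e" "b + c"] by (simp_all add: p_def q_def r_def t_def l_def)
  have "l * \<sigma> - \<kappa> * r = ((b - c) * u - (d - e) * w) * t"
    unfolding l_def \<sigma>_def \<kappa>_def t_def r_def by algebra
  then have "m = (b - c) * u - (d - e) * w"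
    using t by (simp add: m_def)
  then have pq': "p' = d - e" "q' = b - c"
    using plane_vector_from_dot_cross[OF r, of "d - e" "b - c"] by (simp_all add: p'_def q'_def r_def \<sigma>_def)
  have "ricci_coords_inv (ricci_coords x) = (u + (p + p') / 2, (q + q') / 2, (q - q') / 2, (p + p') / 2, (p - p') / 2, w + (q - q') / 2)"
    by (simp add: y ricci_coords_inv_def Let_def r_def p_def q_def m_def p'_def q'_def)
  then show ?thesis
    by (simp add: x pq pq')
qed

lemma ricci_coords_ricci_coords_inv:
  assumes "y \<in> coords_domain"
  shows "ricci_coords (ricci_coords_inv y) = y"
proof -
  obtain u w t \<sigma> \<kappa> l where y: "y = (u, w, t, \<sigma>, \<kappa>, l)"
    by (cases y) auto
  define r p q m p' q' where "r = u\<^sup>2 + w\<^sup>2" and "p = (t * u - l * w) / r" and "q = (t * w + l * u) / r"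
    and "m = (l * \<sigma> - \<kappa> * r) / t" and "p' = (\<sigma> * u - m * w) / r" and "q' = (\<sigma> * w + m * u) / r"
  have "0 < r" and t: "t \<noteq> 0"
    using assms by (simp_all add: y coords_domain_def r_def)
  then have r: "r \<noteq> 0"
    by simp
  have pq: "p * u + q * w = t" "q * u - p * w = l"
    using dot_cross_of_plane_vector[of u w t l] r by (simp_all add: p_def q_def r_def)
  have pq': "p' * u + q' * w = \<sigma>" "q' * u - p' * w = m"
    using dot_cross_of_plane_vector[of u w \<sigma> m] r by (simp_all add: p'_def q'_def r_def)
  have "(q * p' - p * q') * r = (q * u - p * w) * (p' * u + q' * w) - (p * u + q * w) * (q' * u - p' * w)"
    unfolding r_def by algebra
  also have "\<dots> = \<kappa> * r"
    using t unfolding pq pq' m_def by simp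
  finally have \<kappa>: "q * p' - p * q' = \<kappa>"
    using r by simp
  have "ricci_coords_inv y = (u + (p + p') / 2, (q + q') / 2, (q - q') / 2, (p + p') / 2, (p - p') / 2, w + (q - q') / 2)"
    by (simp add: y ricci_coords_inv_def Let_def r_def p_def q_def m_def p'_def q'_def)
  moreover have "ricci_coords \<dots> = (u, w, p * u + q * w, p' * u + q' * w, q * p' - p * q', q * u - p * w)"
    by (simp add: ricci_coords_def field_simps)
  ultimately show ?thesis
    by (simp add: y pq pq' \<kappa>)
qed

lemma smooth_on_ricci_coords: "smooth_on UNIV ricci_coords"
  unfolding ricci_coords_def case_prod_unfold by (intro smooth_on_arith_intros) simp_all

lemma open_coords_domain: "open coords_domain"
  unfolding coords_domain_def case_prod_unfold
  by (intro open_Collect_conj open_Collect_less open_Collect_neq continuous_intros)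

lemma smooth_on_ricci_coords_inv: "smooth_on coords_domain ricci_coords_inv"
  unfolding ricci_coords_inv_def Let_def case_prod_unfold
  by (intro smooth_on_arith_intros)
    (simp_all add: open_coords_domain, auto simp: coords_domain_def case_prod_unfold)

section \<open>The slice chart\<close>

definition shift_domain :: "real \<Rightarrow> R6 set" where
  "shift_domain s = {(u, w, t, \<sigma>, \<kappa>, l). 0 < u\<^sup>2 + w\<^sup>2 \<and> 0 < s * t \<and> 0 < \<sigma>\<^sup>2 + \<kappa>\<^sup>2}"

definition slice_domain :: "R6 set" where
  "slice_domain = {(u, w, y, \<sigma>, \<kappa>, l). 0 < u\<^sup>2 + w\<^sup>2 \<and> 0 < \<sigma>\<^sup>2 + \<kappa>\<^sup>2 \<and> 0 < y + sqrt (\<sigma>\<^sup>2 + \<kappa>\<^sup>2)}"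

definition slice :: "R6 set" where
  "slice = {(u, w, y, \<sigma>, \<kappa>, l). y = 0}"

definition level_shift :: "real \<Rightarrow> R6 \<Rightarrow> R6" where
  "level_shift s = (\<lambda>(u, w, t, \<sigma>, \<kappa>, l). (u, w, s * t - sqrt (\<sigma>\<^sup>2 + \<kappa>\<^sup>2), \<sigma>, \<kappa>, l))"

definition level_unshift :: "real \<Rightarrow> R6 \<Rightarrow> R6" where
  "level_unshift s = (\<lambda>(u, w, y, \<sigma>, \<kappa>, l). (u, w, s * (y + sqrt (\<sigma>\<^sup>2 + \<kappa>\<^sup>2)), \<sigma>, \<kappa>, l))"

lemma subspace_slice: "subspace slice"
  by (auto simp: subspace_def slice_def zero_prod_def)

lemma open_shift_domain: "open (shift_domain s)"
  unfolding shift_domain_def case_prod_unfold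
  by (intro open_Collect_conj open_Collect_less continuous_intros)

lemma open_slice_domain: "open slice_domain"
  unfolding slice_domain_def case_prod_unfold
  by (intro open_Collect_conj open_Collect_less continuous_intros)

lemma level_unshift_level_shift: "s\<^sup>2 = 1 \<Longrightarrow> level_unshift s (level_shift s y) = y"
  by (auto simp: level_shift_def level_unshift_def mult.assoc[symmetric] power2_eq_square split: prod.splits)

lemma level_shift_level_unshift: "s\<^sup>2 = 1 \<Longrightarrow> level_shift s (level_unshift s y) = y"
  by (auto simp: level_shift_def level_unshift_def mult.assoc[symmetric] power2_eq_square split: prod.splits)

lemma level_shift_in_slice_domain_iff: "level_shift s y \<in> slice_domain \<longleftrightarrow> y \<in> shift_domain s"
  by (auto simp: level_shift_def slice_domain_def shift_domain_def split: prod.splits)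

lemma level_shift_in_slice_iff:
  assumes "s\<^sup>2 = 1" "y \<in> shift_domain s"
  shows "level_shift s y \<in> slice \<longleftrightarrow> y \<in> half_cone s"
proof -
  obtain u w t \<sigma> \<kappa> l where y: "y = (u, w, t, \<sigma>, \<kappa>, l)"
    by (cases y) auto
  have st: "0 < s * t"
    using assms(2) by (simp add: y shift_domain_def)
  have "(s * t)\<^sup>2 = t\<^sup>2"
    using assms(1) by (simp add: power_mult_distrib)
  then have "s * t = sqrt (\<sigma>\<^sup>2 + \<kappa>\<^sup>2) \<longleftrightarrow> t\<^sup>2 = \<sigma>\<^sup>2 + \<kappa>\<^sup>2"
    using st by (metis less_eq_real_def real_sqrt_unique real_sqrt_pow2 sum_power2_ge_zero)
  then show ?thesis
    using st by (simp add: y level_shift_def slice_def half_cone_def)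
qed

lemma smooth_on_level_shift: "smooth_on (shift_domain s) (level_shift s)"
  unfolding level_shift_def case_prod_unfold
  by (intro smooth_on_arith_intros)
    (simp_all add: open_shift_domain, auto simp: shift_domain_def case_prod_unfold)

lemma smooth_on_level_unshift: "smooth_on slice_domain (level_unshift s)"
  unfolding level_unshift_def case_prod_unfold
  by (intro smooth_on_arith_intros)
    (simp_all add: open_slice_domain, auto simp: slice_domain_def case_prod_unfold)

abbreviation ricci_chart_domain :: "real \<Rightarrow> R6 set" where
  "ricci_chart_domain s \<equiv> ricci_coords -` shift_domain s"

definition ricci_chart :: "real \<Rightarrow> R6 \<Rightarrow> R6" where
  "ricci_chart s x = level_shift s (ricci_coords x)"

definition ricci_chart_inv :: "real \<Rightarrow> R6 \<Rightarrow> R6" where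
  "ricci_chart_inv s y = ricci_coords_inv (level_unshift s y)"

lemma open_ricci_chart_domain: "open (ricci_chart_domain s)"
  using open_shift_domain smooth_on_Ck_on[OF smooth_on_ricci_coords, of 0] by (intro open_vimage) simp_all

lemma shift_domain_subset_coords_domain: "shift_domain s \<subseteq> coords_domain"
  by (auto simp: shift_domain_def coords_domain_def)

lemma level_unshift_in_shift_domain:
  "s\<^sup>2 = 1 \<Longrightarrow> y \<in> slice_domain \<Longrightarrow> level_unshift s y \<in> shift_domain s"
  using level_shift_in_slice_domain_iff[of s "level_unshift s y"] by (simp add: level_shift_level_unshift)

lemma ricci_chart_inv_ricci_chart:
  "s\<^sup>2 = 1 \<Longrightarrow> x \<in> ricci_chart_domain s \<Longrightarrow> ricci_chart_inv s (ricci_chart s x) = x"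
  using ricci_coords_inv_ricci_coords[OF subsetD[OF shift_domain_subset_coords_domain]]
  by (simp add: ricci_chart_def ricci_chart_inv_def level_unshift_level_shift)

lemma ricci_chart_ricci_chart_inv:
  assumes "s\<^sup>2 = 1" "y \<in> slice_domain"
  shows "ricci_chart_inv s y \<in> ricci_chart_domain s" "ricci_chart s (ricci_chart_inv s y) = y"
proof -
  have "level_unshift s y \<in> shift_domain s"
    using assms by (rule level_unshift_in_shift_domain)
  then have "ricci_coords (ricci_chart_inv s y) = level_unshift s y"
    unfolding ricci_chart_inv_def
    by (intro ricci_coords_ricci_coords_inv subsetD[OF shift_domain_subset_coords_domain])
  then show "ricci_chart_inv s y \<in> ricci_chart_domain s" "ricci_chart s (ricci_chart_inv s y) = y"
    using \<open>level_unshift s y \<in> shift_domain s\<close> assms(1)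
    by (simp_all add: ricci_chart_def level_shift_level_unshift)
qed

lemma ricci_chart_image:
  assumes "s\<^sup>2 = 1"
  shows "ricci_chart s ` (ricci_chart_domain s) = slice_domain"
proof
  show "ricci_chart s ` (ricci_chart_domain s) \<subseteq> slice_domain"
    by (auto simp: ricci_chart_def level_shift_in_slice_domain_iff)
  show "slice_domain \<subseteq> ricci_chart s ` (ricci_chart_domain s)"
    using ricci_chart_ricci_chart_inv[OF assms] by (metis image_eqI subsetI)
qed

lemma smooth_on_ricci_chart: "smooth_on (ricci_chart_domain s) (ricci_chart s)"
  unfolding ricci_chart_def
  by (rule smooth_on_compose[OF smooth_on_level_shift smooth_on_subset[OF smooth_on_ricci_coords]])
    (auto simp: open_ricci_chart_domain)

lemma smooth_on_ricci_chart_inv: "s\<^sup>2 = 1 \<Longrightarrow> smooth_on slice_domain (ricci_chart_inv s)"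
  unfolding ricci_chart_inv_def
  using subsetD[OF shift_domain_subset_coords_domain level_unshift_in_shift_domain]
  by (intro smooth_on_compose[OF smooth_on_ricci_coords_inv smooth_on_level_unshift]) blast

lemma rank_one_locus_subset_ricci_chart_domain:
  "rank_one_locus s \<subseteq> ricci_chart_domain s"
proof
  fix x assume "x \<in> rank_one_locus s"
  then have cone: "ricci_coords x \<in> half_cone s"
    by (simp add: rank_one_locus_eq_vimage)
  obtain a b c d e f where x: "x = (a, b, c, d, e, f)"
    by (cases x) auto
  obtain u w t \<sigma> \<kappa> l where y: "ricci_coords x = (u, w, t, \<sigma>, \<kappa>, l)"
    by (cases "ricci_coords x") auto
  have t: "t = (d + e) * u + (b + c) * w"
    using y by (auto simp: x ricci_coords_def)
  have "0 < s * t" and t2: "t\<^sup>2 = \<sigma>\<^sup>2 + \<kappa>\<^sup>2"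
    using cone by (simp_all add: y half_cone_def)
  then have "t \<noteq> 0"
    by auto
  then have "u \<noteq> 0 \<or> w \<noteq> 0"
    using t by auto
  then have "0 < u\<^sup>2 + w\<^sup>2"
    by (simp add: sum_power2_gt_zero_iff)
  moreover have "0 < \<sigma>\<^sup>2 + \<kappa>\<^sup>2"
    using \<open>t \<noteq> 0\<close> unfolding t2[symmetric] by simp
  ultimately show "x \<in> ricci_chart_domain s"
    using \<open>0 < s * t\<close> by (simp add: y shift_domain_def)
qed

lemma rank_one_locus_iff_ricci_chart_in_slice:
  "s\<^sup>2 = 1 \<Longrightarrow> x \<in> ricci_chart_domain s \<Longrightarrow> x \<in> rank_one_locus s \<longleftrightarrow> ricci_chart s x \<in> slice"
  using level_shift_in_slice_iff by (simp add: rank_one_locus_eq_vimage ricci_chart_def)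

lemma ricci_chart_in_slice:
  assumes "s\<^sup>2 = 1" "x \<in> rank_one_locus s"
  shows "ricci_chart s x \<in> slice_domain \<inter> slice"
proof -
  have "x \<in> ricci_chart_domain s"
    using assms(2) rank_one_locus_subset_ricci_chart_domain by blast
  then show ?thesis
    using assms rank_one_locus_iff_ricci_chart_in_slice
    by (simp add: ricci_chart_def level_shift_in_slice_domain_iff)
qed

lemma ricci_chart_inv_in_rank_one_locus:
  assumes "s\<^sup>2 = 1" "y \<in> slice_domain \<inter> slice"
  shows "ricci_chart_inv s y \<in> rank_one_locus s"
  using assms rank_one_locus_iff_ricci_chart_in_slice[OF assms(1)] ricci_chart_ricci_chart_inv[OF assms(1)]
  by simp

lemma ricci_chart_rank_one_locus:
  assumes "s\<^sup>2 = 1"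
  shows "ricci_chart s ` rank_one_locus s = slice_domain \<inter> slice"
proof
  show "ricci_chart s ` rank_one_locus s \<subseteq> slice_domain \<inter> slice"
    using ricci_chart_in_slice[OF assms] by blast
  show "slice_domain \<inter> slice \<subseteq> ricci_chart s ` rank_one_locus s"
  proof
    fix y assume y: "y \<in> slice_domain \<inter> slice"
    then have "y = ricci_chart s (ricci_chart_inv s y)"
      using ricci_chart_ricci_chart_inv(2)[OF assms] by simp
    then show "y \<in> ricci_chart s ` rank_one_locus s"
      using ricci_chart_inv_in_rank_one_locus[OF assms y] by blast
  qed
qed

lemma smooth_submanifold_rank_one_locus:
  assumes "s\<^sup>2 = 1"
  shows "smooth_submanifold (rank_one_locus s)"
  by (rule smooth_submanifoldI[OF smooth_on_ricci_chart smooth_on_ricci_chart_inv[OF assms]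
        ricci_chart_image[OF assms] ricci_chart_inv_ricci_chart[OF assms] ricci_chart_ricci_chart_inv(2)[OF assms]
        subspace_slice rank_one_locus_subset_ricci_chart_domain ricci_chart_rank_one_locus[OF assms]])

section \<open>Log-polar coordinates on the slice\<close>

definition slice_to_torus :: "R6 \<Rightarrow> complex \<times> complex \<times> real \<times> real \<times> real" where
  "slice_to_torus = (\<lambda>(u, w, y, \<sigma>, \<kappa>, l).
     (sgn (Complex u w), sgn (Complex \<sigma> \<kappa>), ln (u\<^sup>2 + w\<^sup>2) / 2, ln (\<sigma>\<^sup>2 + \<kappa>\<^sup>2) / 2, l))"

definition torus_to_slice :: "complex \<times> complex \<times> real \<times> real \<times> real \<Rightarrow> R6" where
  "torus_to_slice = (\<lambda>(\<zeta>, \<eta>, r, \<rho>, l). (exp r * Re \<zeta>, exp r * Im \<zeta>, 0, exp \<rho> * Re \<eta>, exp \<rho> * Im \<eta>, l))"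

definition punctured_planes :: "(complex \<times> complex \<times> real \<times> real \<times> real) set" where
  "punctured_planes = (- {0}) \<times> (- {0}) \<times> UNIV"

lemma sgn_Complex: "sgn (Complex u w) = Complex (u / sqrt (u\<^sup>2 + w\<^sup>2)) (w / sqrt (u\<^sup>2 + w\<^sup>2))"
  by (simp add: complex_eq_iff complex_norm)

lemma Complex_scaled: "Complex (c * Re \<zeta>) (c * Im \<zeta>) = of_real c * \<zeta>"
  by (simp add: complex_eq_iff)

lemma sum_squares_scaled: "(c * Re \<zeta>)\<^sup>2 + (c * Im \<zeta>)\<^sup>2 = c\<^sup>2 * (cmod \<zeta>)\<^sup>2"
  by (simp add: cmod_power2 power_mult_distrib algebra_simps)

lemma sgn_scaled_unit: "cmod \<zeta> = 1 \<Longrightarrow> 0 < c \<Longrightarrow> sgn (of_real c * \<zeta>) = \<zeta>"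
  unfolding sgn_mult sgn_of_real by (simp add: sgn_div_norm)

lemma exp_half_ln:
  assumes "0 < x"
  shows "exp (ln x / 2) = sqrt x"
proof -
  have "ln x / 2 = ln (sqrt x)"
    using assms by (simp add: ln_sqrt)
  then show ?thesis
    using assms by simp
qed

lemma smooth_on_slice_to_torus: "smooth_on slice_domain slice_to_torus"
  unfolding slice_to_torus_def case_prod_unfold sgn_Complex
  by (intro smooth_on_arith_intros smooth_on_Complex smooth_on_ln)
    (simp_all add: open_slice_domain, auto simp: slice_domain_def case_prod_unfold)

lemma open_punctured_planes: "open punctured_planes"
  unfolding punctured_planes_def by (intro open_Times open_Compl) auto

lemma smooth_on_torus_to_slice: "smooth_on punctured_planes torus_to_slice"
  unfolding torus_to_slice_def case_prod_unfold
  by (intro smooth_on_arith_intros smooth_on_exp smooth_on_Re smooth_on_Im) (simp_all add: open_punctured_planes)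

lemma torus_subset_punctured_planes: "torus_times_R3 \<subseteq> punctured_planes"
  by (auto simp: torus_times_R3_def punctured_planes_def)

lemma slice_to_torus_in_torus: "y \<in> slice_domain \<Longrightarrow> slice_to_torus y \<in> torus_times_R3"
  by (auto simp: slice_domain_def slice_to_torus_def torus_times_R3_def norm_sgn complex_eq_iff
      sum_power2_gt_zero_iff split: prod.splits)

lemma torus_to_slice_slice_to_torus:
  assumes "y \<in> slice_domain \<inter> slice"
  shows "torus_to_slice (slice_to_torus y) = y"
proof -
  obtain u w y' \<sigma> \<kappa> l where y: "y = (u, w, y', \<sigma>, \<kappa>, l)"
    by (cases y) auto
  have "0 < u\<^sup>2 + w\<^sup>2" "0 < \<sigma>\<^sup>2 + \<kappa>\<^sup>2" "y' = 0"
    using assms by (simp_all add: y slice_domain_def slice_def)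
  then show ?thesis
    by (simp add: y slice_to_torus_def torus_to_slice_def exp_half_ln complex_norm)
qed

lemma torus_to_slice_in_slice:
  assumes "z \<in> punctured_planes"
  shows "torus_to_slice z \<in> slice_domain \<inter> slice"
proof -
  obtain \<zeta> \<eta> r \<rho> l where z: "z = (\<zeta>, \<eta>, r, \<rho>, l)"
    by (cases z) auto
  have "\<zeta> \<noteq> 0" "\<eta> \<noteq> 0"
    using assms by (simp_all add: z punctured_planes_def)
  then show ?thesis
    by (simp add: z torus_to_slice_def slice_domain_def slice_def sum_squares_scaled)
qed

lemma slice_to_torus_torus_to_slice:
  assumes "z \<in> torus_times_R3"
  shows "slice_to_torus (torus_to_slice z) = z"
proof -
  obtain \<zeta> \<eta> r \<rho> l where z: "z = (\<zeta>, \<eta>, r, \<rho>, l)"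
    by (cases z) auto
  have "cmod \<zeta> = 1" "cmod \<eta> = 1"
    using assms by (simp_all add: z torus_times_R3_def)
  moreover have "ln ((exp r)\<^sup>2) / 2 = r" for r :: real
    by (simp add: power2_eq_square exp_add[symmetric])
  ultimately show ?thesis
    by (simp add: z slice_to_torus_def torus_to_slice_def Complex_scaled sum_squares_scaled sgn_scaled_unit)
qed

lemma diffeomorphic_rank_one_locus_torus:
  assumes "s\<^sup>2 = 1"
  shows "diffeomorphic (rank_one_locus s) torus_times_R3"
proof (rule diffeomorphicI)
  show "smooth_on (ricci_chart_domain s) (\<lambda>x. slice_to_torus (ricci_chart s x))"
    by (rule smooth_on_compose[OF smooth_on_slice_to_torus smooth_on_ricci_chart])
      (simp add: ricci_chart_image[OF assms])
  show "smooth_on punctured_planes (\<lambda>z. ricci_chart_inv s (torus_to_slice z))"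
    by (rule smooth_on_compose[OF smooth_on_ricci_chart_inv[OF assms] smooth_on_torus_to_slice])
      (use torus_to_slice_in_slice in blast)
  show "slice_to_torus (ricci_chart s x) \<in> torus_times_R3 \<and>
      ricci_chart_inv s (torus_to_slice (slice_to_torus (ricci_chart s x))) = x"
    if "x \<in> rank_one_locus s" for x
    using ricci_chart_in_slice[OF assms that] slice_to_torus_in_torus torus_to_slice_slice_to_torus
      ricci_chart_inv_ricci_chart[OF assms subsetD[OF rank_one_locus_subset_ricci_chart_domain that]]
    by simp
  show "ricci_chart_inv s (torus_to_slice z) \<in> rank_one_locus s \<and>
      slice_to_torus (ricci_chart s (ricci_chart_inv s (torus_to_slice z))) = z"
    if "z \<in> torus_times_R3" for z
  proof -
    have "torus_to_slice z \<in> slice_domain \<inter> slice"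
      using that torus_subset_punctured_planes torus_to_slice_in_slice by blast
    then show ?thesis
      using that ricci_chart_inv_in_rank_one_locus[OF assms] ricci_chart_ricci_chart_inv(2)[OF assms]
        slice_to_torus_torus_to_slice by simp
  qed
qed (simp_all add: rank_one_locus_subset_ricci_chart_domain torus_subset_punctured_planes)

theorem theorem1p2:
  shows "smooth_submanifold A1plus \<and> diffeomorphic A1plus torus_times_R3 \<and>
         smooth_submanifold A1minus \<and> diffeomorphic A1minus torus_times_R3"
  using smooth_submanifold_rank_one_locus[of 1] smooth_submanifold_rank_one_locus[of "-1"]
    diffeomorphic_rank_one_locus_torus[of 1] diffeomorphic_rank_one_locus_torus[of "-1"]
  by (simp add: A1plus_eq_rank_one_locus A1minus_eq_rank_one_locus)

end
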